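(* Let $S$ be an inverse semigroup whose semilattice of idempotents $\Sigma$ is a continuous poset. Then $S$ is a mirror semigroup if and only if, for every $\epsilon\in\Sigma$ and every pair of distinct elements $s,t\in H_\epsilon$, there exists $\varphi\in\Sigma$ with $\varphi \prec\!\!\!\prec \epsilon$ and $s\varphi\neq t\varphi$. In this case, $(S,\leqslant)$ is a continuous poset.
   Context: An inverse semigroup is a semigroup $S$ in which every $s$ has a unique $s^*$ with $ss^*s=s$ and $s^*ss^*=s^*$. $\Sigma=\Sigma(S)$ is the set of idempotents. The intrinsic order is $s\leqslant t$ iff $s=t\epsilon$ for some idempotent $\epsilon$. For $\epsilon\in\Sigma$, $H_\epsilon=\{s\in S : s^*s=\epsilon\}$. A subset is directed if nonempty and any two elements have an upper bound in it. $S$ is a mirror semigroup if every directed subset of $\Sigma$ having a supremum in $(\Sigma,\leqslant)$ also has a supremum in $(S,\leqslant)$. In a poset, $x$ is way-below $y$ if for every directed subset $D$ that has a supremum with $y\leqslant \sup D$, there is $d\in D$ with $x\leqslant d$; $\prec\!\!\!\prec$ denotes the way-below relation of the poset $(\Sigma,\leqslant)$. A poset is continuous if for every element $s$ the set of elements way-below $s$ is directed with supremum $s$. *)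

theory Defs
  imports Main
begin

class inverse_semigroup = semigroup_mult +
  assumes unique_inverse: "\<forall>s::'a. \<exists>!t. s * t * s = s \<and> t * s * t = t"

context inverse_semigroup
begin

definition istar :: "'a \<Rightarrow> 'a" where
  "istar s = (THE t. s * t * s = s \<and> t * s * t = t)"

definition Idem :: "'a set" where
  "Idem = {e. e * e = e}"

definition ileq :: "'a \<Rightarrow> 'a \<Rightarrow> bool" where
  "ileq s t \<longleftrightarrow> (\<exists>e\<in>Idem. s = t * e)"

definition H :: "'a \<Rightarrow> 'a set" where
  "H e = {s. istar s * s = e}"

end

definition directed_in :: "('a \<Rightarrow> 'a \<Rightarrow> bool) \<Rightarrow> 'a set \<Rightarrow> bool" where
  "directed_in le D \<longleftrightarrow> D \<noteq> {} \<and> (\<forall>x\<in>D. \<forall>y\<in>D. \<exists>z\<in>D. le x z \<and> le y z)"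

definition is_sup_in :: "('a \<Rightarrow> 'a \<Rightarrow> bool) \<Rightarrow> 'a set \<Rightarrow> 'a set \<Rightarrow> 'a \<Rightarrow> bool" where
  "is_sup_in le A D x \<longleftrightarrow> x \<in> A \<and> (\<forall>d\<in>D. le d x) \<and>
     (\<forall>y\<in>A. (\<forall>d\<in>D. le d y) \<longrightarrow> le x y)"

definition way_below_in :: "('a \<Rightarrow> 'a \<Rightarrow> bool) \<Rightarrow> 'a set \<Rightarrow> 'a \<Rightarrow> 'a \<Rightarrow> bool" where
  "way_below_in le A x y \<longleftrightarrow>
     (\<forall>D. D \<subseteq> A \<longrightarrow> directed_in le D \<longrightarrow>
        (\<forall>s. is_sup_in le A D s \<longrightarrow> le y s \<longrightarrow> (\<exists>d\<in>D. le x d)))"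

definition continuous_poset :: "('a \<Rightarrow> 'a \<Rightarrow> bool) \<Rightarrow> 'a set \<Rightarrow> bool" where
  "continuous_poset le A \<longleftrightarrow>
     (\<forall>s\<in>A. directed_in le {x\<in>A. way_below_in le A x s} \<and>
             is_sup_in le A {x\<in>A. way_below_in le A x s} s)"

definition mirror_semigroup :: "'a::inverse_semigroup itself \<Rightarrow> bool" where
  "mirror_semigroup _ \<longleftrightarrow>
     (\<forall>D. D \<subseteq> (Idem::'a set) \<longrightarrow> directed_in ileq D \<longrightarrow>
        (\<exists>x. is_sup_in ileq Idem D x) \<longrightarrow> (\<exists>y. is_sup_in ileq UNIV D y))"

end

theory Submission
  imports Defs
begin

text \<open>The central fact is that an element \<open>s\<close> is the join in \<open>S\<close> of its restrictions \<open>s \<phi>\<close>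
  whenever the \<open>\<phi>\<close> range over idempotents whose join in \<open>S\<close> is \<open>s\<^sup>* s\<close>. In a mirror
  semigroup the idempotents way below \<open>\<epsilon>\<close> have join \<open>\<epsilon>\<close> in \<open>S\<close>, so two elements of \<open>H\<^sub>\<epsilon>\<close>
  that agree on all of them are joins of the same set, hence equal. Conversely, let \<open>x\<close> be the
  join in \<open>\<Sigma>\<close> of a directed \<open>D \<subseteq> \<Sigma>\<close> and \<open>z\<close> an upper bound of \<open>D\<close> in \<open>S\<close>: then
  \<open>x \<le> z\<^sup>* z\<close>, so \<open>z x \<in> H\<^sub>x\<close>, and \<open>z x\<close> agrees with \<open>x\<close> on every \<open>\<phi> \<ll> x\<close>, since such a \<open>\<phi>\<close>
  lies below some \<open>d \<in> D\<close> on which \<open>z\<close> acts as the identity; separation forces \<open>z x = x\<close>,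
  i.e. \<open>x \<le> z\<close>. Finally the restrictions \<open>s \<phi>\<close> with \<open>\<phi> \<ll> s\<^sup>* s\<close> are way below \<open>s\<close> in \<open>S\<close>
  and form a directed set with join \<open>s\<close>, which makes \<open>S\<close> continuous.\<close>

lemma way_below_in_imp_le:
  assumes refl: "\<And>x. le x x" and "y \<in> A" "way_below_in le A x y"
  shows "le x y"
proof -
  have "directed_in le {y}" "is_sup_in le A {y} y"
    using assms unfolding directed_in_def is_sup_in_def by auto
  then show ?thesis
    using assms unfolding way_below_in_def by blast
qed

lemma is_sup_in_unique:
  assumes "\<And>x y. le x y \<Longrightarrow> le y x \<Longrightarrow> x = y" "is_sup_in le A D x" "is_sup_in le A D y"
  shows "x = y"
  using assms unfolding is_sup_in_def by blast

lemma directed_in_image: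
  assumes "directed_in le D" and mono: "\<And>x y. x \<in> D \<Longrightarrow> y \<in> D \<Longrightarrow> le x y \<Longrightarrow> le' (f x) (f y)"
  shows "directed_in le' (f ` D)"
  unfolding directed_in_def
proof (intro conjI ballI)
  show "f ` D \<noteq> {}" using assms(1) unfolding directed_in_def by blast
  fix a b assume "a \<in> f ` D" "b \<in> f ` D"
  then obtain x y where "x \<in> D" "y \<in> D" "a = f x" "b = f y" by blast
  moreover from this obtain z where "z \<in> D" "le x z" "le y z"
    using assms(1) unfolding directed_in_def by blast
  ultimately show "\<exists>c\<in>f ` D. le' a c \<and> le' b c"
    using mono by blast
qed

text \<open>By the definition of way-below, \<open>V\<close> is cofinal in the way-below set of \<open>s\<close>.\<close>
lemma way_below_set_directed_sup:
  assumes refl: "\<And>x. le x x" and trans: "\<And>x y z. le x y \<Longrightarrow> le y z \<Longrightarrow> le x z"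
    and V: "V \<subseteq> {x\<in>A. way_below_in le A x s}" "directed_in le V" "is_sup_in le A V s"
  shows "directed_in le {x\<in>A. way_below_in le A x s}"
    and "is_sup_in le A {x\<in>A. way_below_in le A x s} s"
proof -
  let ?B = "{x\<in>A. way_below_in le A x s}"
  have cofinal: "\<exists>v\<in>V. le x v" if "x \<in> ?B" for x
    using that V refl unfolding way_below_in_def is_sup_in_def by blast
  show "directed_in le ?B"
    unfolding directed_in_def
  proof (intro conjI ballI)
    show "?B \<noteq> {}" using V unfolding directed_in_def by blast
    fix a b assume "a \<in> ?B" "b \<in> ?B"
    then obtain v w where "v \<in> V" "w \<in> V" "le a v" "le b w" using cofinal by blast
    then obtain z where "z \<in> V" "le v z" "le w z" using V(2) unfolding directed_in_def by blast
    then show "\<exists>z\<in>?B. le a z \<and> le b z" using \<open>le a v\<close> \<open>le b w\<close> V(1) trans by blast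
  qed
  show "is_sup_in le A ?B s"
    using V cofinal trans unfolding is_sup_in_def by blast
qed

context inverse_semigroup
begin

lemma istar_inverse: "s * istar s * s = s" "istar s * s * istar s = istar s"
proof -
  have "s * istar s * s = s \<and> istar s * s * istar s = istar s"
    unfolding istar_def by (rule theI'[OF unique_inverse[rule_format]])
  then show "s * istar s * s = s" "istar s * s * istar s = istar s" by auto
qed

lemma istar_unique: "s * t * s = s \<Longrightarrow> t * s * t = t \<Longrightarrow> istar s = t"
  using unique_inverse istar_inverse by metis

lemma Idem_iff: "e \<in> Idem \<longleftrightarrow> e * e = e"
  by (simp add: Idem_def)

lemma Idem_absorb: "e \<in> Idem \<Longrightarrow> e * e = e" "e \<in> Idem \<Longrightarrow> e * (e * x) = e * x"
  by (simp_all add: Idem_iff flip: mult.assoc)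

lemma istar_Idem: "e \<in> Idem \<Longrightarrow> istar e = e"
  by (rule istar_unique) (simp_all add: Idem_absorb)

lemma Idem_mult_closed:
  assumes e: "e \<in> Idem" and f: "f \<in> Idem"
  shows "e * f \<in> Idem"
proof -
  define x where "x = istar (e * f)"
  have x: "e * f * x * (e * f) = e * f" "x * (e * f) * x = x"
    unfolding x_def by (fact istar_inverse)+
  text \<open>\<open>f x e\<close> is another inverse of \<open>e f\<close>, hence equal to \<open>x\<close>; this forces \<open>x\<close> to be idempotent.\<close>
  have xx: "x * (e * (f * (x * y))) = x * y" for y
    using x(2) by (metis mult.assoc)
  have "istar (e * f) = f * x * e"
    using x xx by (intro istar_unique) (simp_all add: mult.assoc Idem_absorb e f)
  then have fxe: "f * x * e = x" by (simp add: x_def)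
  have "x * x = f * (x * (e * f) * x) * e"
    by (subst (1 2) fxe[symmetric]) (simp add: mult.assoc)
  then have "x \<in> Idem" by (simp add: x fxe Idem_iff)
  moreover have "istar x = e * f"
    using x by (intro istar_unique) (simp_all add: mult.assoc)
  ultimately show ?thesis by (simp add: istar_Idem)
qed

lemma Idem_commute:
  assumes e: "e \<in> Idem" and f: "f \<in> Idem"
  shows "e * f = f * e"
proof -
  have ef: "e * f \<in> Idem" and fe: "f * e \<in> Idem" using Idem_mult_closed e f by auto
  have ef': "e * (f * (e * f)) = e * f" and fe': "f * (e * (f * e)) = f * e"
    using ef fe by (simp_all add: Idem_iff mult.assoc)
  have "istar (e * f) = f * e"
    by (intro istar_unique) (simp_all add: mult.assoc Idem_absorb e f ef' fe')
  then show ?thesis by (simp add: istar_Idem ef)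
qed

lemma Idem_left_commute: "e \<in> Idem \<Longrightarrow> f \<in> Idem \<Longrightarrow> e * (f * x) = f * (e * x)"
  by (metis Idem_commute mult.assoc)

lemma dom_Idem: "istar s * s \<in> Idem"
  by (metis Idem_iff istar_inverse(2) mult.assoc)

lemma ran_Idem: "s * istar s \<in> Idem"
  by (metis Idem_iff istar_inverse(1) mult.assoc)

lemma istar_mult: "istar (s * t) = istar t * istar s"
proof (rule istar_unique)
  have "s * t * (istar t * istar s) * (s * t) = s * ((t * istar t) * ((istar s * s) * t))"
    by (simp add: mult.assoc)
  also have "\<dots> = s * ((istar s * s) * ((t * istar t) * t))"
    by (simp add: Idem_left_commute dom_Idem ran_Idem)
  finally show "s * t * (istar t * istar s) * (s * t) = s * t"
    by (simp add: istar_inverse flip: mult.assoc)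
  have "istar t * istar s * (s * t) * (istar t * istar s)
      = istar t * ((istar s * s) * ((t * istar t) * istar s))"
    by (simp add: mult.assoc)
  also have "\<dots> = istar t * ((t * istar t) * ((istar s * s) * istar s))"
    by (simp add: Idem_left_commute dom_Idem ran_Idem)
  finally show "istar t * istar s * (s * t) * (istar t * istar s) = istar t * istar s"
    by (simp add: istar_inverse flip: mult.assoc)
qed

lemma dom_mult_Idem:
  assumes f: "f \<in> Idem"
  shows "istar (s * f) * (s * f) = istar s * s * f"
proof -
  have "istar (s * f) * (s * f) = f * ((istar s * s) * f)"
    by (simp add: istar_mult istar_Idem f mult.assoc)
  also have "\<dots> = istar s * s * f"
    by (simp add: Idem_left_commute[OF f dom_Idem] Idem_absorb f)
  finally show ?thesis .
qed

lemma ileq_iff: "ileq s t \<longleftrightarrow> s = t * (istar s * s)"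
proof
  assume "ileq s t"
  then obtain f where f: "f \<in> Idem" and s: "s = t * f"
    unfolding ileq_def by blast
  have "t * (istar s * s) = t * (istar t * t) * f"
    using s by (simp add: dom_mult_Idem f mult.assoc)
  also have "\<dots> = s"
    using s by (simp add: istar_inverse flip: mult.assoc)
  finally show "s = t * (istar s * s)" ..
next
  assume "s = t * (istar s * s)"
  then show "ileq s t"
    unfolding ileq_def using dom_Idem by blast
qed

lemma Idem_ileq_iff: "e \<in> Idem \<Longrightarrow> ileq e t \<longleftrightarrow> e = t * e"
  by (simp add: ileq_iff istar_Idem Idem_absorb)

lemma ileq_refl: "ileq s s"
  by (simp add: ileq_iff istar_inverse flip: mult.assoc)

lemma ileq_trans: "ileq s t \<Longrightarrow> ileq t u \<Longrightarrow> ileq s u"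
  unfolding ileq_def by (metis Idem_mult_closed mult.assoc)

lemma ileq_antisym:
  assumes "ileq s t" "ileq t s"
  shows "s = t"
proof -
  obtain e f where ef: "e \<in> Idem" "f \<in> Idem" and s: "s = t * e" and t: "t = s * f"
    using assms unfolding ileq_def by blast
  have tf: "t * f = t"
    using t by (simp add: mult.assoc Idem_absorb ef)
  have "t = t * e * f"
    using s t by simp
  also have "\<dots> = t * f * e"
    by (simp add: mult.assoc Idem_commute ef)
  finally show ?thesis
    using s tf by simp
qed

lemma ileq_Idem_closed: "ileq s e \<Longrightarrow> e \<in> Idem \<Longrightarrow> s \<in> Idem"
  unfolding ileq_def using Idem_mult_closed by blast

lemma mult_Idem_ileq: "f \<in> Idem \<Longrightarrow> ileq (s * f) s"
  unfolding ileq_def by blast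

lemma Idem_mult_ileq:
  assumes f: "f \<in> Idem"
  shows "ileq (f * s) s"
proof -
  have "s * (istar (f * s) * (f * s)) = (s * istar s) * (f * s)"
    by (simp add: istar_mult istar_Idem f Idem_absorb mult.assoc)
  also have "\<dots> = f * (s * istar s * s)"
    by (subst Idem_left_commute[OF ran_Idem f]) (simp add: mult.assoc)
  finally show ?thesis
    by (simp add: ileq_iff istar_inverse)
qed

lemma mult_left_mono_Idem:
  assumes "e \<in> Idem" "f \<in> Idem" "ileq e f"
  shows "ileq (s * e) (s * f)"
proof -
  have "e = f * e"
    using assms Idem_ileq_iff by blast
  then have "s * e = s * f * e"
    by (simp add: mult.assoc)
  then show ?thesis
    using mult_Idem_ileq[OF assms(1)] by metis
qed

lemma dom_mono:
  assumes "ileq s t"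
  shows "ileq (istar s * s) (istar t * t)"
proof -
  have "istar s * s = istar (t * (istar s * s)) * (t * (istar s * s))"
    using assms ileq_iff by simp
  also have "\<dots> = istar t * t * (istar s * s)"
    by (rule dom_mult_Idem[OF dom_Idem])
  finally show ?thesis
    by (simp add: Idem_ileq_iff dom_Idem)
qed

lemma is_sup_in_dom_image:
  assumes y: "is_sup_in ileq UNIV D y"
  shows "is_sup_in ileq Idem ((\<lambda>d. istar d * d) ` D) (istar y * y)"
  unfolding is_sup_in_def
proof (intro conjI ballI impI)
  show "istar y * y \<in> Idem" by (rule dom_Idem)
  show "ileq e (istar y * y)" if "e \<in> (\<lambda>d. istar d * d) ` D" for e
    using that y dom_mono unfolding is_sup_in_def by blast
  fix g assume g: "g \<in> Idem" and ub: "\<forall>e\<in>(\<lambda>d. istar d * d) ` D. ileq e g"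
  have "ileq d (y * g)" if d: "d \<in> D" for d
  proof -
    have "d = y * (istar d * d)"
      using y d ileq_iff unfolding is_sup_in_def by blast
    also have "\<dots> = y * g * (istar d * d)"
      using ub d Idem_ileq_iff[OF dom_Idem] by (simp add: mult.assoc)
    finally show ?thesis
      unfolding ileq_def using dom_Idem by blast
  qed
  then have "ileq y (y * g)"
    using y unfolding is_sup_in_def by blast
  then have "ileq (istar y * y) (istar y * y * g)"
    using dom_mono dom_mult_Idem[OF g] by metis
  then show "ileq (istar y * y) g"
    using Idem_mult_ileq[OF dom_Idem] ileq_trans by blast
qed

lemma is_sup_in_restrictions:
  assumes W: "W \<subseteq> Idem" and sup: "is_sup_in ileq UNIV W (istar s * s)"
  shows "is_sup_in ileq UNIV ((*) s ` W) s"
  unfolding is_sup_in_def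
proof (intro conjI ballI impI)
  show "s \<in> UNIV" ..
  show "ileq v s" if "v \<in> (*) s ` W" for v
    using that W mult_Idem_ileq by blast
  fix u assume ub: "\<forall>v\<in>(*) s ` W. ileq v u"
  have "ileq \<phi> (istar s * u)" if \<phi>: "\<phi> \<in> W" for \<phi>
  proof -
    have \<phi>I: "\<phi> \<in> Idem" using \<phi> W by blast
    have \<phi>_dom: "\<phi> = istar s * s * \<phi>"
      using \<phi> sup Idem_ileq_iff[OF \<phi>I] unfolding is_sup_in_def by blast
    then have "istar (s * \<phi>) * (s * \<phi>) = \<phi>"
      by (simp add: dom_mult_Idem[OF \<phi>I])
    then have "s * \<phi> = u * \<phi>"
      using ub \<phi> ileq_iff[of "s * \<phi>" u] by auto
    then have "istar s * u * \<phi> = \<phi>"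
      using \<phi>_dom by (simp add: mult.assoc)
    then show ?thesis
      using Idem_ileq_iff[OF \<phi>I] by simp
  qed
  then have "ileq (istar s * s) (istar s * u)"
    using sup unfolding is_sup_in_def by blast
  then have "s = (s * istar s) * (u * (istar s * s))"
    using Idem_ileq_iff[OF dom_Idem] istar_inverse(1) by (metis mult.assoc)
  then have "ileq s (u * (istar s * s))"
    using Idem_mult_ileq[OF ran_Idem] by metis
  then show "ileq s u"
    using mult_Idem_ileq[OF dom_Idem] ileq_trans by blast
qed

lemma way_below_restriction:
  assumes \<phi>: "\<phi> \<in> Idem" "way_below_in ileq Idem \<phi> (istar s * s)"
  shows "way_below_in ileq UNIV (s * \<phi>) s"
  unfolding way_below_in_def
proof (intro allI impI)
  fix D y assume D: "directed_in ileq D" and y: "is_sup_in ileq UNIV D y" and "ileq s y"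
  let ?E = "(\<lambda>d. istar d * d) ` D"
  have "?E \<subseteq> Idem" "directed_in ileq ?E"
    using dom_Idem directed_in_image[OF D, of ileq "\<lambda>d. istar d * d"] dom_mono by auto
  moreover have "ileq (istar s * s) (istar y * y)"
    using \<open>ileq s y\<close> by (rule dom_mono)
  ultimately obtain d where d: "d \<in> D" "ileq \<phi> (istar d * d)"
    using \<phi>(2) is_sup_in_dom_image[OF y] unfolding way_below_in_def by blast
  have \<phi>_s: "\<phi> = istar s * s * \<phi>"
    using way_below_in_imp_le[OF ileq_refl dom_Idem \<phi>(2)] Idem_ileq_iff[OF \<phi>(1)] by blast
  have \<phi>_d: "\<phi> = istar d * d * \<phi>"
    using d(2) Idem_ileq_iff[OF \<phi>(1)] by blast
  have "s * \<phi> = y * \<phi>"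
    using \<open>ileq s y\<close> \<phi>_s ileq_iff by (metis mult.assoc)
  also have "\<dots> = d * \<phi>"
    using y d(1) \<phi>_d ileq_iff unfolding is_sup_in_def by (metis mult.assoc)
  finally show "\<exists>d'\<in>D. ileq (s * \<phi>) d'"
    using d(1) mult_Idem_ileq[OF \<phi>(1)] by metis
qed

end

lemma is_sup_in_UNIV_if_mirror:
  fixes D :: "'a::inverse_semigroup set"
  assumes "mirror_semigroup TYPE('a)" "D \<subseteq> Idem" "directed_in ileq D"
    and e: "is_sup_in ileq Idem D e"
  shows "is_sup_in ileq UNIV D e"
proof -
  obtain y where y: "is_sup_in ileq UNIV D y"
    using assms unfolding mirror_semigroup_def by blast
  have "ileq y e"
    using y e unfolding is_sup_in_def by blast
  moreover from this have "ileq e y"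
    using y e ileq_Idem_closed unfolding is_sup_in_def by blast
  ultimately show ?thesis
    using y ileq_antisym by blast
qed

lemma is_sup_in_UNIV_way_below:
  fixes e :: "'a::inverse_semigroup"
  assumes "continuous_poset (ileq :: 'a \<Rightarrow> 'a \<Rightarrow> bool) Idem" "mirror_semigroup TYPE('a)"
    and "e \<in> Idem"
  shows "is_sup_in ileq UNIV {\<phi>\<in>Idem. way_below_in ileq Idem \<phi> e} e"
proof (rule is_sup_in_UNIV_if_mirror[OF assms(2)])
  show "{\<phi>\<in>Idem. way_below_in ileq Idem \<phi> e} \<subseteq> Idem" by blast
  show "directed_in ileq {\<phi>\<in>Idem. way_below_in ileq Idem \<phi> e}"
    and "is_sup_in ileq Idem {\<phi>\<in>Idem. way_below_in ileq Idem \<phi> e} e"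
    using assms(1,3) unfolding continuous_poset_def by blast+
qed

lemma separating_if_mirror:
  fixes e s t :: "'a::inverse_semigroup"
  assumes cont: "continuous_poset (ileq :: 'a \<Rightarrow> 'a \<Rightarrow> bool) Idem"
    and mirror: "mirror_semigroup TYPE('a)"
    and e: "e \<in> Idem" and st: "s \<in> H e" "t \<in> H e" "s \<noteq> t"
  shows "\<exists>\<phi>\<in>Idem. way_below_in ileq Idem \<phi> e \<and> s * \<phi> \<noteq> t * \<phi>"
proof (rule ccontr)
  define W where "W = {\<phi>\<in>Idem. way_below_in ileq Idem \<phi> e}"
  assume "\<not> ?thesis"
  then have "(*) s ` W = (*) t ` W"
    unfolding W_def by (intro image_cong) auto
  moreover have "is_sup_in ileq UNIV W (istar s * s)" "is_sup_in ileq UNIV W (istar t * t)"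
    using is_sup_in_UNIV_way_below[OF cont mirror e] st unfolding W_def H_def by auto
  then have "is_sup_in ileq UNIV ((*) s ` W) s" "is_sup_in ileq UNIV ((*) t ` W) t"
    unfolding W_def by (auto intro: is_sup_in_restrictions)
  ultimately show False
    using is_sup_in_unique[OF ileq_antisym] \<open>s \<noteq> t\<close> by metis
qed

lemma mirror_if_separating:
  assumes sep: "\<forall>e\<in>(Idem :: 'a::inverse_semigroup set). \<forall>s\<in>H e. \<forall>t\<in>H e. s \<noteq> t \<longrightarrow>
                  (\<exists>\<phi>\<in>Idem. way_below_in ileq Idem \<phi> e \<and> s * \<phi> \<noteq> t * \<phi>)"
  shows "mirror_semigroup TYPE('a)"
  unfolding mirror_semigroup_def
proof (intro allI impI)
  fix D :: "'a set"
  assume D: "D \<subseteq> Idem" "directed_in ileq D" and "\<exists>x. is_sup_in ileq Idem D x"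
  then obtain x where x: "is_sup_in ileq Idem D x" by blast
  have xI: "x \<in> Idem" using x unfolding is_sup_in_def by blast
  have "ileq x z" if z: "\<forall>d\<in>D. ileq d z" for z
  proof -
    have d_eq: "d = z * d" if "d \<in> D" for d
      using that z D Idem_ileq_iff by blast
    have "ileq d (istar z * z)" if "d \<in> D" for d
      using that z D dom_mono[of d z] by (auto simp: istar_Idem Idem_absorb)
    then have "ileq x (istar z * z)"
      using x dom_Idem unfolding is_sup_in_def by blast
    then have x_dom: "x = istar z * z * x"
      using Idem_ileq_iff[OF xI] by blast
    have "istar (z * x) * (z * x) = x"
      using dom_mult_Idem[OF xI, of z] x_dom by simp
    then have zx_H: "z * x \<in> H x"
      unfolding H_def by simp
    have x_H: "x \<in> H x"
      unfolding H_def using xI by (simp add: istar_Idem Idem_absorb)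
    have agree: "z * x * \<phi> = x * \<phi>" if \<phi>: "\<phi> \<in> Idem" "way_below_in ileq Idem \<phi> x" for \<phi>
    proof -
      obtain d where d: "d \<in> D" "ileq \<phi> d"
        using \<phi>(2) D x ileq_refl unfolding way_below_in_def by blast
      have \<phi>_x: "\<phi> = x * \<phi>"
        using way_below_in_imp_le[OF ileq_refl xI \<phi>(2)] Idem_ileq_iff[OF \<phi>(1)] by blast
      have \<phi>_d: "\<phi> = d * \<phi>"
        using d Idem_ileq_iff[OF \<phi>(1)] by blast
      have "z * x * \<phi> = z * d * \<phi>"
        using \<phi>_x \<phi>_d by (metis mult.assoc)
      also have "\<dots> = x * \<phi>"
        using d_eq[OF d(1)] \<phi>_x \<phi>_d by simp
      finally show ?thesis .
    qed
    have "z * x = x"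
    proof (rule ccontr)
      assume "z * x \<noteq> x"
      then obtain \<phi>
        where "\<phi> \<in> Idem" "way_below_in ileq Idem \<phi> x" "z * x * \<phi> \<noteq> x * \<phi>"
        using sep xI zx_H x_H by blast
      with agree show False by blast
    qed
    then show ?thesis
      unfolding ileq_def using xI by metis
  qed
  then have "is_sup_in ileq UNIV D x"
    using x unfolding is_sup_in_def by blast
  then show "\<exists>y. is_sup_in ileq UNIV D y" ..
qed

lemma continuous_if_mirror:
  assumes cont: "continuous_poset (ileq :: 'a::inverse_semigroup \<Rightarrow> 'a \<Rightarrow> bool) Idem"
    and mirror: "mirror_semigroup TYPE('a)"
  shows "continuous_poset ileq (UNIV :: 'a set)"
  unfolding continuous_poset_def
proof (intro ballI conjI)
  fix s :: 'a
  define W where "W = {\<phi>\<in>Idem. way_below_in ileq Idem \<phi> (istar s * s)}"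
  have W: "W \<subseteq> Idem" "directed_in ileq W" "is_sup_in ileq UNIV W (istar s * s)"
    using cont is_sup_in_UNIV_way_below[OF cont mirror dom_Idem]
    unfolding W_def continuous_poset_def by (auto simp: dom_Idem)
  have V: "(*) s ` W \<subseteq> {v\<in>UNIV. way_below_in ileq UNIV v s}"
    "directed_in ileq ((*) s ` W)" "is_sup_in ileq UNIV ((*) s ` W) s"
  proof -
    show "(*) s ` W \<subseteq> {v\<in>UNIV. way_below_in ileq UNIV v s}"
      unfolding W_def using way_below_restriction by blast
    show "directed_in ileq ((*) s ` W)"
      using W(1) by (intro directed_in_image[OF W(2)] mult_left_mono_Idem) auto
    show "is_sup_in ileq UNIV ((*) s ` W) s"
      using W(1,3) by (rule is_sup_in_restrictions)
  qed
  show "directed_in ileq {v\<in>UNIV. way_below_in ileq UNIV v s}"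
    and "is_sup_in ileq UNIV {v\<in>UNIV. way_below_in ileq UNIV v s} s"
    using way_below_set_directed_sup[where le = ileq, OF ileq_refl ileq_trans V] by auto
qed

theorem theorem5p5:
  assumes "continuous_poset (ileq :: 'a::inverse_semigroup \<Rightarrow> 'a \<Rightarrow> bool) Idem"
  shows "(mirror_semigroup TYPE('a) \<longleftrightarrow>
           (\<forall>e\<in>(Idem::'a set). \<forall>s\<in>H e. \<forall>t\<in>H e. s \<noteq> t \<longrightarrow>
              (\<exists>\<phi>\<in>Idem. way_below_in ileq Idem \<phi> e \<and> s * \<phi> \<noteq> t * \<phi>)))
         \<and> (mirror_semigroup TYPE('a) \<longrightarrow> continuous_poset (ileq :: 'a \<Rightarrow> 'a \<Rightarrow> bool) UNIV)"
  using separating_if_mirror[OF assms] mirror_if_separating continuous_if_mirror[OF assms]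
  by blast

end
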